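(* Let $G=K_n$ with $n\geq 3$, let $g:A\to B$ be a function with $I=g(A)$ and $s=|I|$ satisfying $2<s<n$. If $|g^{-1}(v)|=\frac{n}{s}$ for every $v\in I$, then $fix(F_G)=2(n-s)-1$.
   Context: A set $S\subseteq V(H)$ is a fixing set of a graph $H$ if the only automorphism of $H$ fixing every vertex of $S$ is the identity; $fix(H)$ is the minimum cardinality of a fixing set of $H$. Functigraph: let $G_1,G_2$ be disjoint copies of a connected graph $G$, with $A=V(G_1)$, $B=V(G_2)$, and let $g:A\to B$ be a function. The functigraph $F_G$ has vertex set $A\cup B$ and edge set $E(G_1)\cup E(G_2)\cup\{ug(u):u\in A\}$. *)

theory Defs
  imports Complex_Main
begin

text \<open>A (simple, undirected) graph is given by a vertex set V and an adjacency
relation E (assumed symmetric and irreflexive where it matters).\<close>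

definition is_automorphism :: "'v set \<Rightarrow> ('v \<Rightarrow> 'v \<Rightarrow> bool) \<Rightarrow> ('v \<Rightarrow> 'v) \<Rightarrow> bool" where
  "is_automorphism V E \<sigma> \<longleftrightarrow>
     bij_betw \<sigma> V V \<and> (\<forall>x\<in>V. \<forall>y\<in>V. E x y \<longleftrightarrow> E (\<sigma> x) (\<sigma> y))"

definition is_fixing_set :: "'v set \<Rightarrow> ('v \<Rightarrow> 'v \<Rightarrow> bool) \<Rightarrow> 'v set \<Rightarrow> bool" where
  "is_fixing_set V E S \<longleftrightarrow> S \<subseteq> V \<and>
     (\<forall>\<sigma>. is_automorphism V E \<sigma> \<and> (\<forall>x\<in>S. \<sigma> x = x) \<longrightarrow> (\<forall>x\<in>V. \<sigma> x = x))"

definition fix_num :: "'v set \<Rightarrow> ('v \<Rightarrow> 'v \<Rightarrow> bool) \<Rightarrow> nat" where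
  "fix_num V E = (LEAST k. \<exists>S. is_fixing_set V E S \<and> card S = k)"

definition complete_adj :: "'a \<Rightarrow> 'a \<Rightarrow> bool" where
  "complete_adj u v \<longleftrightarrow> u \<noteq> v"

text \<open>Functigraph of G = (V, E) with respect to g : A \<rightarrow> B, where A = Inl ` V is
the first copy and B = Inr ` V the second copy; g is given on the underlying
vertices (u in the first copy is joined to g u in the second copy).\<close>
definition functigraph_vertices :: "'a set \<Rightarrow> ('a + 'a) set" where
  "functigraph_vertices V = Inl ` V \<union> Inr ` V"

fun functigraph_adj :: "('a \<Rightarrow> 'a \<Rightarrow> bool) \<Rightarrow> ('a \<Rightarrow> 'a) \<Rightarrow> ('a + 'a) \<Rightarrow> ('a + 'a) \<Rightarrow> bool" where
  "functigraph_adj E g (Inl u) (Inl v) = E u v"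
| "functigraph_adj E g (Inr u) (Inr v) = E u v"
| "functigraph_adj E g (Inl u) (Inr w) = (w = g u)"
| "functigraph_adj E g (Inr w) (Inl u) = (w = g u)"

end

theory Submission
  imports Defs
begin

text \<open>Two vertices of a graph are twins if they have the same neighbours apart from
each other; exchanging them is an automorphism, so a fixing set must contain one of
them. In the functigraph of \<open>K\<^sub>n\<close> the vertices of \<open>B\<close> outside the image \<open>I = g(A)\<close> are
pairwise twins, and so are the vertices of \<open>A\<close> in a common fibre of \<open>g\<close>; hence a fixing
set has at least \<open>(n - s - 1) + (n - s)\<close> elements. Conversely, leave out one vertex
\<open>w\<^sub>0\<close> of \<open>B - I\<close> and one representative of every fibre. If every fibre has a second
element and \<open>B - I\<close> a second vertex \<open>w\<^sub>1\<close>, then each vertex \<open>v \<in> I\<close> of \<open>B\<close> is the only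
common neighbour of \<open>w\<^sub>1\<close> and a fixed vertex of its fibre, after which the
representatives and finally \<open>w\<^sub>0\<close> are forced to be fixed. Fibres of size \<open>n/s\<close> give
\<open>n \<ge> 2s\<close>, so both conditions hold.\<close>

definition twins :: "'v set \<Rightarrow> ('v \<Rightarrow> 'v \<Rightarrow> bool) \<Rightarrow> 'v \<Rightarrow> 'v \<Rightarrow> bool" where
  "twins V E a b \<longleftrightarrow> a \<in> V \<and> b \<in> V \<and> a \<noteq> b \<and> (\<forall>z\<in>V - {a, b}. E z a = E z b)"

lemma swap_twins_is_automorphism:
  assumes "twins V E a b" and sym: "\<And>x y. E x y = E y x" and irrefl: "\<And>x. \<not> E x x"
  shows "is_automorphism V E (id(a := b, b := a))"
proof -
  have ab: "a \<in> V" "b \<in> V" and nbrs: "\<And>z. z \<in> V - {a, b} \<Longrightarrow> E z a = E z b"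
    using assms(1) by (auto simp: twins_def)
  have "bij_betw (id(a := b, b := a)) V V"
    using ab by (intro bij_betw_byWitness[where f'="id(a := b, b := a)"]) auto
  moreover have "E x y \<longleftrightarrow> E ((id(a := b, b := a)) x) ((id(a := b, b := a)) y)"
    if "x \<in> V" "y \<in> V" for x y
  proof (cases "x \<in> {a, b}"; cases "y \<in> {a, b}")
    assume "x \<in> {a, b}" "y \<in> {a, b}"
    then show ?thesis
      using sym[of a b] irrefl[of a] irrefl[of b] by auto
  next
    assume "x \<in> {a, b}" "y \<notin> {a, b}"
    then show ?thesis
      using nbrs[of y] sym[of a y] sym[of b y] that by auto
  next
    assume "x \<notin> {a, b}" "y \<in> {a, b}"
    then show ?thesis
      using nbrs[of x] that by auto
  next
    assume "x \<notin> {a, b}" "y \<notin> {a, b}"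
    then show ?thesis
      by simp
  qed
  ultimately show ?thesis
    by (simp add: is_automorphism_def)
qed

lemma fixing_set_meets_twins:
  assumes "is_fixing_set V E S" and "twins V E a b"
    and "\<And>x y. E x y = E y x" and "\<And>x. \<not> E x x"
  shows "a \<in> S \<or> b \<in> S"
proof (rule ccontr)
  assume "\<not> (a \<in> S \<or> b \<in> S)"
  then have "\<forall>x\<in>S. (id(a := b, b := a)) x = x"
    by auto
  moreover have "is_automorphism V E (id(a := b, b := a))"
    using assms(2-4) by (rule swap_twins_is_automorphism)
  ultimately have "(id(a := b, b := a)) a = a"
    using assms(1,2) unfolding is_fixing_set_def twins_def by blast
  with assms(2) show False
    by (simp add: twins_def)
qed

lemma bij_betw_fixing_complement_maps_into:
  assumes "bij_betw \<sigma> V V" and "\<forall>x\<in>V - T. \<sigma> x = x" and "x \<in> V \<inter> T"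
  shows "\<sigma> x \<in> T"
proof (rule ccontr)
  assume "\<sigma> x \<notin> T"
  moreover have "\<sigma> x \<in> V"
    using assms(1,3) bij_betwE by blast
  ultimately have "\<sigma> (\<sigma> x) = \<sigma> x"
    using assms(2) by blast
  then have "\<sigma> x = x"
    using assms(1,3) \<open>\<sigma> x \<in> V\<close> by (auto simp: bij_betw_def dest: inj_onD)
  with \<open>\<sigma> x \<notin> T\<close> assms(3) show False
    by simp
qed

lemma fix_num_eqI:
  assumes "is_fixing_set V E S" and "card S = k"
    and "\<And>S'. is_fixing_set V E S' \<Longrightarrow> k \<le> card S'"
  shows "fix_num V E = k"
  unfolding fix_num_def using assms by (intro Least_equality) auto

lemma card_image_le_half:
  assumes "finite A" and "\<And>b. b \<in> f ` A \<Longrightarrow> 2 \<le> card {a \<in> A. f a = b}"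
  shows "2 * card (f ` A) \<le> card A"
proof -
  have "card A = card (\<Union>b\<in>f ` A. {a \<in> A. f a = b})"
    by (rule arg_cong[where f=card]) auto
  also have "\<dots> = (\<Sum>b\<in>f ` A. card {a \<in> A. f a = b})"
    using assms(1) by (intro card_UN_disjoint) auto
  also have "\<dots> \<ge> (\<Sum>b\<in>f ` A. 2)"
    using assms(2) by (intro sum_mono) auto
  finally show ?thesis
    by simp
qed

lemma functigraph_vertices_iff [simp]:
  "Inl u \<in> functigraph_vertices V \<longleftrightarrow> u \<in> V"
  "Inr u \<in> functigraph_vertices V \<longleftrightarrow> u \<in> V"
  by (auto simp: functigraph_vertices_def)

lemma functigraph_vertices_cases:
  assumes "x \<in> functigraph_vertices V"
  obtains u where "u \<in> V" "x = Inl u" | u where "u \<in> V" "x = Inr u"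
  using assms by (auto simp: functigraph_vertices_def)

lemma functigraph_complete_adj_sym:
  "functigraph_adj complete_adj g x y = functigraph_adj complete_adj g y x"
  by (cases x; cases y) (auto simp: complete_adj_def)

lemma functigraph_complete_adj_irrefl:
  "\<not> functigraph_adj complete_adj g x x"
  by (cases x) (auto simp: complete_adj_def)

lemma functigraph_complete_twins_Inl:
  assumes "x \<in> V" "y \<in> V" "x \<noteq> y" "g x = g y"
  shows "twins (functigraph_vertices V) (functigraph_adj complete_adj g) (Inl x) (Inl y)"
  using assms unfolding twins_def
  by (auto simp: complete_adj_def elim!: functigraph_vertices_cases)

lemma functigraph_complete_twins_Inr:
  assumes "x \<in> V - g ` V" "y \<in> V - g ` V" "x \<noteq> y"
  shows "twins (functigraph_vertices V) (functigraph_adj complete_adj g) (Inr x) (Inr y)"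
  using assms unfolding twins_def
  by (auto simp: complete_adj_def elim!: functigraph_vertices_cases)

lemma functigraph_complete_common_neighbour:
  assumes "x \<in> functigraph_vertices V" "w \<notin> g ` V"
    and "functigraph_adj complete_adj g x (Inl u)" "functigraph_adj complete_adj g x (Inr w)"
  shows "x = Inr (g u)"
  using assms by (auto simp: complete_adj_def elim!: functigraph_vertices_cases)

lemma functigraph_complete_fixing_set_card_ge:
  assumes "finite V"
    and fixing: "is_fixing_set (functigraph_vertices V) (functigraph_adj complete_adj g) S"
  shows "2 * (card V - card (g ` V)) - 1 \<le> card S"
proof -
  have twin_in_S: "a \<in> S \<or> b \<in> S"
    if "twins (functigraph_vertices V) (functigraph_adj complete_adj g) a b" for a b
    using fixing that functigraph_complete_adj_sym functigraph_complete_adj_irrefl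
    by (rule fixing_set_meets_twins)
  define P where "P = {u \<in> V - g ` V. Inr u \<in> S}"
  define Q where "Q = {u \<in> V. Inl u \<in> S}"
  have "\<forall>x\<in>V - g ` V - P. \<forall>y\<in>V - g ` V - P. x = y"
    using twin_in_S functigraph_complete_twins_Inr by (fastforce simp: P_def)
  then have "card (V - g ` V - P) \<le> 1"
    using assms(1) card_le_Suc0_iff_eq[of "V - g ` V - P"] by simp
  moreover have "card (V - g ` V - P) = card (V - g ` V) - card P"
    using assms(1) by (intro card_Diff_subset) (auto simp: P_def)
  ultimately have card_P: "card (V - g ` V) - 1 \<le> card P"
    by linarith
  have "inj_on g (V - Q)"
    using twin_in_S functigraph_complete_twins_Inl by (fastforce simp: Q_def intro: inj_onI)
  then have "card (V - Q) \<le> card (g ` V)"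
    using assms(1) by (intro card_inj_on_le) auto
  then have card_Q: "card V - card (g ` V) \<le> card Q"
    using assms(1) by (simp add: Q_def card_Diff_subset finite_subset)
  have "card (Inl ` Q \<union> Inr ` P) = card Q + card P"
    using assms(1) by (subst card_Un_disjoint) (auto simp: P_def Q_def card_image)
  moreover have "card (Inl ` Q \<union> Inr ` P) \<le> card S"
    using fixing finite_subset[of S "functigraph_vertices V"] assms(1)
    by (intro card_mono) (auto simp: is_fixing_set_def functigraph_vertices_def P_def Q_def)
  moreover have "card (V - g ` V) \<ge> card V - card (g ` V)"
    using assms(1) by (simp add: diff_card_le_card_Diff)
  ultimately show ?thesis
    using card_P card_Q by linarith
qed

lemma functigraph_complete_fixing_set:
  assumes "g ` V \<subseteq> V"
    and rep: "\<And>v. v \<in> g ` V \<Longrightarrow> r v \<in> V \<and> g (r v) = v"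
    and fibres: "\<And>v. v \<in> g ` V \<Longrightarrow> \<exists>u\<in>V. g u = v \<and> u \<noteq> r v"
    and w: "w\<^sub>0 \<in> V - g ` V" "w\<^sub>1 \<in> V - g ` V" "w\<^sub>0 \<noteq> w\<^sub>1"
  shows "is_fixing_set (functigraph_vertices V) (functigraph_adj complete_adj g)
           (Inr ` (V - g ` V - {w\<^sub>0}) \<union> Inl ` (V - r ` g ` V))"
    (is "is_fixing_set ?W ?E ?S")
proof -
  have non_rep_in_S: "Inl u \<in> ?S" if "u \<in> V" "u \<noteq> r (g u)" for u
    using that rep by auto
  have "\<forall>x\<in>?W. \<sigma> x = x" if "is_automorphism ?W ?E \<sigma>" and fixes_S: "\<forall>x\<in>?S. \<sigma> x = x" for \<sigma>
  proof -
    have bij: "bij_betw \<sigma> ?W ?W"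
      and adj: "\<And>x y. x \<in> ?W \<Longrightarrow> y \<in> ?W \<Longrightarrow> ?E x y \<longleftrightarrow> ?E (\<sigma> x) (\<sigma> y)"
      using that(1) by (auto simp: is_automorphism_def)
    have fixes_image: "\<sigma> (Inr v) = Inr v" if v: "v \<in> g ` V" for v
    proof -
      obtain u where u: "u \<in> V" "g u = v" "u \<noteq> r v"
        using fibres v by blast
      have fixed: "\<sigma> (Inl u) = Inl u" "\<sigma> (Inr w\<^sub>1) = Inr w\<^sub>1"
        using fixes_S non_rep_in_S u w by auto
      have in_W: "Inr v \<in> ?W" "Inl u \<in> ?W" "Inr w\<^sub>1 \<in> ?W"
        using assms(1) u v w by auto
      have "?E (Inr v) (Inl u)" "?E (Inr v) (Inr w\<^sub>1)"
        using u w v by (auto simp: complete_adj_def)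
      then have adj_\<sigma>: "?E (\<sigma> (Inr v)) (Inl u)" "?E (\<sigma> (Inr v)) (Inr w\<^sub>1)"
        using adj[OF in_W(1,2)] adj[OF in_W(1,3)] fixed by simp_all
      have "\<sigma> (Inr v) \<in> ?W"
        using bij in_W(1) bij_betwE by blast
      moreover have "w\<^sub>1 \<notin> g ` V"
        using w by blast
      ultimately have "\<sigma> (Inr v) = Inr (g u)"
        using adj_\<sigma> by (rule functigraph_complete_common_neighbour)
      with u show ?thesis
        by simp
    qed
    have fixes_non_reps: "\<sigma> x = x"
      if "x \<in> ?W" "x \<notin> Inl ` r ` g ` V" "x \<noteq> Inr w\<^sub>0" for x
      using that(1)
    proof (cases rule: functigraph_vertices_cases)
      case (1 u)
      with that(2) have "x \<in> ?S"
        by blast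
      with fixes_S show ?thesis
        by blast
    next
      case (2 u)
      show ?thesis
      proof (cases "u \<in> g ` V")
        case True
        with 2 fixes_image show ?thesis
          by blast
      next
        case False
        with 2 that(3) have "x \<in> ?S"
          by blast
        with fixes_S show ?thesis
          by blast
      qed
    qed
    have fixes_reps: "\<sigma> (Inl (r v)) = Inl (r v)" if v: "v \<in> g ` V" for v
    proof -
      obtain u where u: "u \<in> V" "g u = v" "u \<noteq> r v"
        using fibres v by blast
      have r: "r v \<in> V" "g (r v) = v"
        using rep v by auto
      have in_W: "Inl (r v) \<in> ?W" "Inr v \<in> ?W" "Inl u \<in> ?W"
        using assms(1) r u v by auto
      have "?E (Inl (r v)) (Inr v)" "?E (Inl (r v)) (Inl u)"
        using r u by (auto simp: complete_adj_def)
      then have "?E (\<sigma> (Inl (r v))) (Inr v)" "?E (\<sigma> (Inl (r v))) (Inl u)"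
        using adj[OF in_W(1,2)] adj[OF in_W(1,3)] fixes_image[OF v] fixes_S non_rep_in_S[of u] u
        by auto
      moreover have "\<sigma> (Inl (r v)) \<in> Inl ` r ` g ` V \<union> {Inr w\<^sub>0}"
        by (rule bij_betw_fixing_complement_maps_into[OF bij]) (use fixes_non_reps in_W(1) v in auto)
      ultimately show ?thesis
        using rep u v w by (auto simp: complete_adj_def)
    qed
    have fixes_all_but_w\<^sub>0: "\<forall>x\<in>?W - {Inr w\<^sub>0}. \<sigma> x = x"
      using fixes_non_reps fixes_reps by fastforce
    have "\<sigma> (Inr w\<^sub>0) \<in> {Inr w\<^sub>0}"
      by (rule bij_betw_fixing_complement_maps_into[OF bij]) (use fixes_all_but_w\<^sub>0 w in auto)
    with fixes_all_but_w\<^sub>0 show ?thesis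
      by blast
  qed
  moreover have "?S \<subseteq> ?W"
    by (auto simp: functigraph_vertices_def)
  ultimately show ?thesis
    by (simp add: is_fixing_set_def)
qed

theorem functigraph_complete_fix_num:
  assumes "finite V" and "g ` V \<subseteq> V"
    and fibres: "\<And>v. v \<in> g ` V \<Longrightarrow> 2 \<le> card {u \<in> V. g u = v}"
    and outside: "2 \<le> card (V - g ` V)"
  shows "fix_num (functigraph_vertices V) (functigraph_adj complete_adj g)
           = 2 * (card V - card (g ` V)) - 1"
proof -
  define r where "r v = (SOME u. u \<in> V \<and> g u = v)" for v
  have rep: "r v \<in> V \<and> g (r v) = v" if "v \<in> g ` V" for v
    unfolding r_def by (rule someI_ex) (use that in auto)
  have "\<exists>u\<in>V. g u = v \<and> u \<noteq> r v" if "v \<in> g ` V" for v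
  proof -
    have "\<not> {u \<in> V. g u = v} \<subseteq> {r v}"
      using fibres[OF that] card_mono[of "{r v}" "{u \<in> V. g u = v}"] by auto
    then show ?thesis
      by blast
  qed
  moreover obtain w\<^sub>0 w\<^sub>1 where w: "w\<^sub>0 \<in> V - g ` V" "w\<^sub>1 \<in> V - g ` V" "w\<^sub>0 \<noteq> w\<^sub>1"
    using outside assms(1) card_le_Suc0_iff_eq[of "V - g ` V"] by auto
  ultimately have fixing: "is_fixing_set (functigraph_vertices V) (functigraph_adj complete_adj g)
      (Inr ` (V - g ` V - {w\<^sub>0}) \<union> Inl ` (V - r ` g ` V))"
    using assms(2) rep by (intro functigraph_complete_fixing_set)
  have "inj_on r (g ` V)"
    using rep by (intro inj_on_inverseI[where g=g]) auto
  then have "card (V - r ` g ` V) = card V - card (g ` V)"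
    using assms(1) rep by (subst card_Diff_subset) (auto simp: card_image)
  moreover have "card (V - g ` V) = card V - card (g ` V)"
    using assms(1,2) by (simp add: card_Diff_subset finite_subset)
  moreover have "card (Inr ` (V - g ` V - {w\<^sub>0}) \<union> Inl ` (V - r ` g ` V))
      = card (V - g ` V - {w\<^sub>0}) + card (V - r ` g ` V)"
    using assms(1) by (subst card_Un_disjoint) (auto simp: card_image)
  ultimately have "card (Inr ` (V - g ` V - {w\<^sub>0}) \<union> Inl ` (V - r ` g ` V))
      = 2 * (card V - card (g ` V)) - 1"
    using w outside assms(1) by simp
  with fixing show ?thesis
    using assms(1) functigraph_complete_fixing_set_card_ge by (intro fix_num_eqI)
qed

theorem corollary3p4:
  fixes V :: "'a set" and g :: "'a \<Rightarrow> 'a" and n s :: nat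
  assumes "finite V" and "card V = n" and "n \<ge> 3"
    and "g ` V \<subseteq> V"
    and "s = card (g ` V)" and "2 < s" and "s < n"
    and "\<forall>v \<in> g ` V. real (card {u \<in> V. g u = v}) = real n / real s"
  shows "fix_num (functigraph_vertices V) (functigraph_adj complete_adj g) = 2 * (n - s) - 1"
proof -
  have fibres: "2 \<le> card {u \<in> V. g u = v}" if "v \<in> g ` V" for v
  proof -
    have "real n / real s > 1"
      using assms(6,7) by simp
    then show ?thesis
      using assms(8) that by fastforce
  qed
  then have "2 * s \<le> n"
    using assms(1,2,5) card_image_le_half by blast
  then have "2 \<le> card (V - g ` V)"
    using assms(1,2,4,5,6) by (simp add: card_Diff_subset finite_subset)
  then show ?thesis
    using functigraph_complete_fix_num[OF assms(1,4) fibres] assms(2,5) by simp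
qed

end
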